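(* Let $X$ and $Y$ be Tychonoff spaces. If the free topological groups $F(X)$ and $F(Y)$ are topologically isomorphic, or if the free Abelian topological groups $A(X)$ and $A(Y)$ are topologically isomorphic, then $X$ is totally disconnected if and only if $Y$ is totally disconnected.
   Context: $F(X)$ is Markov's free topological group of $X$: a topological group containing $X$ as a generating subspace such that every continuous map from $X$ to a topological group extends uniquely to a continuous homomorphism from $F(X)$. $A(X)$ is Markov's free Abelian topological group, defined analogously with Abelian topological groups. A space is totally disconnected if any two distinct points are separated by a clopen set. *)

theory Defs
  imports "HOL-Analysis.Analysis" "HOL-Algebra.Generated_Groups"
begin

definition Tychonoff_space :: "'a topology \<Rightarrow> bool" where
  "Tychonoff_space X \<longleftrightarrow> completely_regular_space X \<and> Hausdorff_space X"

definition totally_disconnected_space :: "'a topology \<Rightarrow> bool" where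
  "totally_disconnected_space X \<longleftrightarrow>
     (\<forall>x\<in>topspace X. \<forall>y\<in>topspace X. x \<noteq> y \<longrightarrow>
        (\<exists>U. openin X U \<and> closedin X U \<and> x \<in> U \<and> y \<notin> U))"

definition topological_group :: "'g monoid \<Rightarrow> 'g topology \<Rightarrow> bool" where
  "topological_group G T \<longleftrightarrow> group G \<and> topspace T = carrier G \<and>
     continuous_map (prod_topology T T) T (\<lambda>(x, y). x \<otimes>\<^bsub>G\<^esub> y) \<and>
     continuous_map T T (\<lambda>x. inv\<^bsub>G\<^esub> x)"

text \<open>The test groups H range over topological groups whose carrier has
  the same type as G; this is no restriction.\<close>
definition free_topological_group ::
    "'x topology \<Rightarrow> 'g monoid \<Rightarrow> 'g topology \<Rightarrow> ('x \<Rightarrow> 'g) \<Rightarrow> bool" where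
  "free_topological_group X G T i \<longleftrightarrow>
     topological_group G T \<and> embedding_map X T i \<and>
     generate G (i ` topspace X) = carrier G \<and>
     (\<forall>(H :: 'g monoid) TH f. topological_group H TH \<and> continuous_map X TH f \<longrightarrow>
        (\<exists>!h. h \<in> extensional (carrier G) \<and> h \<in> hom G H \<and> continuous_map T TH h \<and>
              (\<forall>x\<in>topspace X. h (i x) = f x)))"

definition free_abelian_topological_group ::
    "'x topology \<Rightarrow> 'g monoid \<Rightarrow> 'g topology \<Rightarrow> ('x \<Rightarrow> 'g) \<Rightarrow> bool" where
  "free_abelian_topological_group X G T i \<longleftrightarrow>
     topological_group G T \<and> comm_group G \<and> embedding_map X T i \<and>
     generate G (i ` topspace X) = carrier G \<and>
     (\<forall>(H :: 'g monoid) TH f. topological_group H TH \<and> comm_group H \<and>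
        continuous_map X TH f \<longrightarrow>
        (\<exists>!h. h \<in> extensional (carrier G) \<and> h \<in> hom G H \<and> continuous_map T TH h \<and>
              (\<forall>x\<in>topspace X. h (i x) = f x)))"

definition top_group_isomorphic ::
    "'g monoid \<Rightarrow> 'g topology \<Rightarrow> 'h monoid \<Rightarrow> 'h topology \<Rightarrow> bool" where
  "top_group_isomorphic G T H TH \<longleftrightarrow>
     (\<exists>h. h \<in> iso G H \<and> homeomorphic_map T TH h)"

end

theory Submission
  imports Defs
begin

text \<open>
  X is totally disconnected iff the underlying space of its free (Abelian) topological group G
  is; the latter property is invariant under homeomorphism. Since X embeds in G, one direction
  is immediate. Conversely, two distinct elements a, b of G are words in finitely many
  generators i(c), c \<in> C. If X is totally disconnected, the map c \<mapsto> i(c) on the finite set C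
  extends to a locally constant map X \<rightarrow> G, i.e. a continuous map into G with the discrete
  topology. Its homomorphic extension G \<rightarrow> G is then continuous into the discrete group and
  fixes a and b, so its fibre over a is a clopen set containing a but not b.
\<close>

lemma totally_disconnected_space_continuous_injective_preimage:
  assumes "totally_disconnected_space Y" "continuous_map X Y f" "inj_on f (topspace X)"
  shows "totally_disconnected_space X"
  unfolding totally_disconnected_space_def
proof (intro ballI impI)
  fix x y assume xy: "x \<in> topspace X" "y \<in> topspace X" "x \<noteq> y"
  then have "f x \<noteq> f y" "f x \<in> topspace Y" "f y \<in> topspace Y"
    using assms(2,3) by (auto simp: inj_on_def continuous_map_def)
  then obtain U where U: "openin Y U" "closedin Y U" "f x \<in> U" "f y \<notin> U"
    using assms(1) unfolding totally_disconnected_space_def by blast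
  show "\<exists>V. openin X V \<and> closedin X V \<and> x \<in> V \<and> y \<notin> V"
    using U xy assms(2)
    by (intro exI[of _ "{z \<in> topspace X. f z \<in> U}"])
       (auto intro: openin_continuous_map_preimage closedin_continuous_map_preimage)
qed

lemma embedding_map_imp_continuous_map:
  assumes "embedding_map X Y f"
  shows "continuous_map X Y f"
  using assms homeomorphic_imp_continuous_map continuous_map_in_subtopology
  unfolding embedding_map_def by blast

lemma embedding_map_totally_disconnected_space:
  assumes "embedding_map X Y f" "totally_disconnected_space Y"
  shows "totally_disconnected_space X"
proof -
  have "continuous_map X Y f" "inj_on f (topspace X)"
    using assms(1) embedding_map_imp_continuous_map homeomorphic_imp_injective_map
    unfolding embedding_map_def by blast+
  then show ?thesis
    using assms(2) totally_disconnected_space_continuous_injective_preimage by blast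
qed

lemma homeomorphic_map_totally_disconnected_space:
  assumes "homeomorphic_map X Y f"
  shows "totally_disconnected_space X \<longleftrightarrow> totally_disconnected_space Y"
proof -
  obtain g where "homeomorphic_maps X Y f g"
    using assms homeomorphic_map_maps by blast
  then have "continuous_map X Y f" "continuous_map Y X g"
    "\<forall>x\<in>topspace X. g (f x) = x" "\<forall>y\<in>topspace Y. f (g y) = y"
    by (auto simp: homeomorphic_maps_def)
  then show ?thesis
    using totally_disconnected_space_continuous_injective_preimage[of Y X f]
      totally_disconnected_space_continuous_injective_preimage[of X Y g]
      inj_on_inverseI[of "topspace X" g f] inj_on_inverseI[of "topspace Y" f g]
    by blast
qed

lemma topological_group_discrete_topology:
  assumes "group G"
  shows "topological_group G (discrete_topology (carrier G))"
  using assms unfolding topological_group_def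
  by (auto simp flip: prod_topology_discrete_topology
      intro: monoid.m_closed[OF group.is_monoid] group.inv_closed)

lemma continuous_map_discrete_topology_if_clopen:
  assumes "openin X C" "closedin X C"
    and f: "continuous_map X (discrete_topology D) f"
    and g: "continuous_map X (discrete_topology D) g"
  shows "continuous_map X (discrete_topology D) (\<lambda>x. if x \<in> C then f x else g x)"
  unfolding continuous_map_def
proof (intro conjI allI impI)
  show "(\<lambda>x. if x \<in> C then f x else g x) \<in> topspace X \<rightarrow> topspace (discrete_topology D)"
    using f g by (auto simp: continuous_map_def)
next
  fix V assume "openin (discrete_topology D) V"
  then have "openin X {x \<in> topspace X. f x \<in> V}" "openin X {x \<in> topspace X. g x \<in> V}"
    using f g by (auto simp: continuous_map_def)
  moreover have "openin X (topspace X - C)"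
    using assms(2) by (simp add: closedin_def)
  moreover have "{x \<in> topspace X. (if x \<in> C then f x else g x) \<in> V} =
      (C \<inter> {x \<in> topspace X. f x \<in> V}) \<union> ((topspace X - C) \<inter> {x \<in> topspace X. g x \<in> V})"
    by auto
  ultimately show "openin X {x \<in> topspace X. (if x \<in> C then f x else g x) \<in> V}"
    using assms(1) by (simp add: openin_Un openin_Int)
qed

lemma totally_disconnected_space_clopen_avoiding_finite:
  assumes "totally_disconnected_space X" "finite F" "F \<subseteq> topspace X"
    "a \<in> topspace X" "a \<notin> F"
  shows "\<exists>C. openin X C \<and> closedin X C \<and> a \<in> C \<and> C \<inter> F = {}"
  using assms(2,3,5)
proof (induction F rule: finite_induct)
  case empty
  then show ?case
    using assms(4) by (intro exI[of _ "topspace X"]) auto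
next
  case (insert b F)
  then obtain C where "openin X C" "closedin X C" "a \<in> C" "C \<inter> F = {}"
    by auto
  moreover obtain U where "openin X U" "closedin X U" "a \<in> U" "b \<notin> U"
    using assms(1,4) insert.prems unfolding totally_disconnected_space_def by blast
  ultimately show ?case
    by (intro exI[of _ "C \<inter> U"]) auto
qed

lemma totally_disconnected_space_locally_constant_interpolation:
  assumes "totally_disconnected_space X" "finite F" "F \<subseteq> topspace X"
    "v ` F \<subseteq> D" "d \<in> D"
  shows "\<exists>f. continuous_map X (discrete_topology D) f \<and> (\<forall>x\<in>F. f x = v x)"
  using assms(2-4)
proof (induction F rule: finite_induct)
  case empty
  then show ?case
    using assms(5) by (intro exI[of _ "\<lambda>_. d"]) auto
next
  case (insert a F)
  then obtain f where f: "continuous_map X (discrete_topology D) f" "\<forall>x\<in>F. f x = v x"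
    by auto
  obtain C where C: "openin X C" "closedin X C" "a \<in> C" "C \<inter> F = {}"
    using totally_disconnected_space_clopen_avoiding_finite[OF assms(1) insert.hyps(1)]
      insert.hyps(2) insert.prems by (metis insert_subset)
  have "continuous_map X (discrete_topology D) (\<lambda>_. v a)"
    using insert.prems by auto
  then have "continuous_map X (discrete_topology D) (\<lambda>x. if x \<in> C then v a else f x)"
    using continuous_map_discrete_topology_if_clopen[OF C(1,2) _ f(1)] by blast
  moreover have "\<forall>x\<in>insert a F. (if x \<in> C then v a else f x) = v x"
    using C f(2) by auto
  ultimately show ?case
    by blast
qed

lemma generate_mono:
  assumes "K \<subseteq> H"
  shows "generate G K \<subseteq> generate G H"
proof
  fix g assume "g \<in> generate G K"
  then show "g \<in> generate G H"
    using assms by induction (auto intro: generate.intros)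
qed

lemma generate_finite_subset:
  assumes "g \<in> generate G S"
  shows "\<exists>F. finite F \<and> F \<subseteq> S \<and> g \<in> generate G F"
  using assms
proof induction
  case one
  then show ?case
    using generate.one by blast
next
  case (incl h)
  then show ?case
    using generate.incl[of h "{h}"] by blast
next
  case (inv h)
  then show ?case
    using generate.inv[of h "{h}"] by blast
next
  case (eng h1 h2)
  then obtain F1 F2 where F: "finite F1" "F1 \<subseteq> S" "h1 \<in> generate G F1"
    "finite F2" "F2 \<subseteq> S" "h2 \<in> generate G F2"
    by blast
  have "h1 \<in> generate G (F1 \<union> F2)" "h2 \<in> generate G (F1 \<union> F2)"
    using F(3,6) generate_mono[of F1 "F1 \<union> F2" G] generate_mono[of F2 "F1 \<union> F2" G] by auto
  then have "h1 \<otimes>\<^bsub>G\<^esub> h2 \<in> generate G (F1 \<union> F2)"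
    by (rule generate.eng)
  then show ?case
    using F by (intro exI[of _ "F1 \<union> F2"]) simp
qed

lemma hom_agree_on_generate:
  assumes "group G" "group H" "f \<in> hom G H" "g \<in> hom G H" "S \<subseteq> carrier G"
    "\<forall>s\<in>S. f s = g s" "x \<in> generate G S"
  shows "f x = g x"
proof -
  have f: "group_hom G H f" and g: "group_hom G H g"
    using assms(1-4) by (simp_all add: group_hom_def group_hom_axioms_def)
  from assms(7) show ?thesis
  proof induction
    case one
    show ?case
      using group_hom.hom_one[OF f] group_hom.hom_one[OF g] by simp
  next
    case (incl s)
    then show ?case
      using assms(6) by blast
  next
    case (inv s)
    then have "s \<in> carrier G" "f s = g s"
      using assms(5,6) by auto
    then show ?case
      using group_hom.hom_inv[OF f] group_hom.hom_inv[OF g] by simp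
  next
    case (eng x y)
    then have "x \<in> carrier G" "y \<in> carrier G"
      using group.generate_in_carrier[OF assms(1,5)] by auto
    then show ?case
      using eng.IH hom_mult[OF assms(3)] hom_mult[OF assms(4)] by simp
  qed
qed

text \<open>
  The fragment of the universal property of F(X) and A(X) that the argument needs: the test
  group is G itself with the discrete topology.
\<close>
definition extends_discrete_self_maps ::
    "'x topology \<Rightarrow> 'g monoid \<Rightarrow> 'g topology \<Rightarrow> ('x \<Rightarrow> 'g) \<Rightarrow> bool" where
  "extends_discrete_self_maps X G T i \<longleftrightarrow>
     (\<forall>f. continuous_map X (discrete_topology (carrier G)) f \<longrightarrow>
        (\<exists>h\<in>hom G G. continuous_map T (discrete_topology (carrier G)) h \<and>
           (\<forall>x\<in>topspace X. h (i x) = f x)))"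

lemma free_topological_group_extends_discrete_self_maps:
  assumes "free_topological_group X G T i"
  shows "extends_discrete_self_maps X G T i"
  unfolding extends_discrete_self_maps_def
proof (intro allI impI)
  fix f assume f: "continuous_map X (discrete_topology (carrier G)) f"
  have "group G"
    using assms by (simp add: free_topological_group_def topological_group_def)
  then show "\<exists>h\<in>hom G G. continuous_map T (discrete_topology (carrier G)) h \<and>
      (\<forall>x\<in>topspace X. h (i x) = f x)"
    using assms f topological_group_discrete_topology
    unfolding free_topological_group_def by (metis (no_types, lifting))
qed

lemma free_abelian_topological_group_extends_discrete_self_maps:
  assumes "free_abelian_topological_group X G T i"
  shows "extends_discrete_self_maps X G T i"
  unfolding extends_discrete_self_maps_def
proof (intro allI impI)
  fix f assume f: "continuous_map X (discrete_topology (carrier G)) f"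
  have "group G" "comm_group G"
    using assms by (simp_all add: free_abelian_topological_group_def topological_group_def)
  then show "\<exists>h\<in>hom G G. continuous_map T (discrete_topology (carrier G)) h \<and>
      (\<forall>x\<in>topspace X. h (i x) = f x)"
    using assms f topological_group_discrete_topology
    unfolding free_abelian_topological_group_def by (metis (no_types, lifting))
qed

lemma totally_disconnected_space_generated_group:
  assumes G: "group G" "topspace T = carrier G" "continuous_map X T i"
    "generate G (i ` topspace X) = carrier G"
    and ext: "extends_discrete_self_maps X G T i"
    and td: "totally_disconnected_space X"
  shows "totally_disconnected_space T"
  unfolding totally_disconnected_space_def
proof (intro ballI impI)
  fix a b assume ab: "a \<in> topspace T" "b \<in> topspace T" "a \<noteq> b"
  have iX: "i ` topspace X \<subseteq> carrier G"
    using continuous_map_image_subset_topspace[OF G(3)] G(2) by simp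
  obtain Fa where Fa: "finite Fa" "Fa \<subseteq> i ` topspace X" "a \<in> generate G Fa"
    using generate_finite_subset[of a G "i ` topspace X"] ab(1) G(2,4) by auto
  obtain Fb where Fb: "finite Fb" "Fb \<subseteq> i ` topspace X" "b \<in> generate G Fb"
    using generate_finite_subset[of b G "i ` topspace X"] ab(2) G(2,4) by auto
  obtain C where C: "C \<subseteq> topspace X" "finite C" "Fa \<union> Fb = i ` C"
    using finite_subset_image[of "Fa \<union> Fb" i "topspace X"] Fa(1,2) Fb(1,2) by auto
  then have "generate G Fa \<subseteq> generate G (i ` C)" "generate G Fb \<subseteq> generate G (i ` C)"
    by (auto intro!: generate_mono)
  then have aC: "a \<in> generate G (i ` C)" and bC: "b \<in> generate G (i ` C)"
    using Fa(3) Fb(3) by blast+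
  have iC: "i ` C \<subseteq> carrier G"
    using C(1) iX by blast
  obtain f where f: "continuous_map X (discrete_topology (carrier G)) f" "\<forall>x\<in>C. f x = i x"
    using totally_disconnected_space_locally_constant_interpolation[OF td C(2,1) iC
        monoid.one_closed[OF group.is_monoid[OF G(1)]]]
    by blast
  obtain h where h: "h \<in> hom G G" "continuous_map T (discrete_topology (carrier G)) h"
    "\<forall>x\<in>topspace X. h (i x) = f x"
    using ext[unfolded extends_discrete_self_maps_def, rule_format, OF f(1)] by blast
  have "\<forall>s\<in>i ` C. h s = s"
    using h(3) f(2) C(1) by auto
  then have "h x = x" if "x \<in> generate G (i ` C)" for x
    using hom_agree_on_generate[OF G(1) G(1) h(1) iso_imp_homomorphism[OF iso_set_refl] iC _ that]
    by simp
  then have "h a = a" "h b = b"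
    using aC bC by blast+
  moreover have "openin T {z \<in> topspace T. h z \<in> {a}}"
    by (rule openin_continuous_map_preimage[OF h(2)]) (use ab G(2) in simp)
  moreover have "closedin T {z \<in> topspace T. h z \<in> {a}}"
    by (rule closedin_continuous_map_preimage[OF h(2)]) (use ab G(2) in simp)
  ultimately show "\<exists>U. openin T U \<and> closedin T U \<and> a \<in> U \<and> b \<notin> U"
    using ab by blast
qed

lemma totally_disconnected_space_iff_generated_group:
  assumes "group G" "topspace T = carrier G" "embedding_map X T i"
    "generate G (i ` topspace X) = carrier G" "extends_discrete_self_maps X G T i"
  shows "totally_disconnected_space X \<longleftrightarrow> totally_disconnected_space T"
  using assms embedding_map_imp_continuous_map embedding_map_totally_disconnected_space
    totally_disconnected_space_generated_group
  by metis

lemma free_topological_group_totally_disconnected_iff: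
  assumes "free_topological_group X G T i"
  shows "totally_disconnected_space X \<longleftrightarrow> totally_disconnected_space T"
proof (rule totally_disconnected_space_iff_generated_group)
  show "extends_discrete_self_maps X G T i"
    using assms by (rule free_topological_group_extends_discrete_self_maps)
qed (use assms in \<open>simp_all add: free_topological_group_def topological_group_def\<close>)

lemma free_abelian_topological_group_totally_disconnected_iff:
  assumes "free_abelian_topological_group X G T i"
  shows "totally_disconnected_space X \<longleftrightarrow> totally_disconnected_space T"
proof (rule totally_disconnected_space_iff_generated_group)
  show "extends_discrete_self_maps X G T i"
    using assms by (rule free_abelian_topological_group_extends_discrete_self_maps)
qed (use assms in \<open>simp_all add: free_abelian_topological_group_def topological_group_def\<close>)

theorem corollary10p10:
  fixes X :: "'x topology" and Y :: "'y topology"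
    and FX :: "'a monoid" and TFX :: "'a topology" and iFX :: "'x \<Rightarrow> 'a"
    and FY :: "'b monoid" and TFY :: "'b topology" and iFY :: "'y \<Rightarrow> 'b"
    and AX :: "'c monoid" and TAX :: "'c topology" and iAX :: "'x \<Rightarrow> 'c"
    and AY :: "'d monoid" and TAY :: "'d topology" and iAY :: "'y \<Rightarrow> 'd"
  assumes "Tychonoff_space X" and "Tychonoff_space Y"
    and "(free_topological_group X FX TFX iFX \<and> free_topological_group Y FY TFY iFY \<and>
          top_group_isomorphic FX TFX FY TFY)
       \<or> (free_abelian_topological_group X AX TAX iAX \<and>
          free_abelian_topological_group Y AY TAY iAY \<and>
          top_group_isomorphic AX TAX AY TAY)"
  shows "totally_disconnected_space X \<longleftrightarrow> totally_disconnected_space Y"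
  using assms(3)
proof
  assume free: "free_topological_group X FX TFX iFX \<and> free_topological_group Y FY TFY iFY \<and>
      top_group_isomorphic FX TFX FY TFY"
  then obtain h where "homeomorphic_map TFX TFY h"
    by (auto simp: top_group_isomorphic_def)
  then show ?thesis
    using free free_topological_group_totally_disconnected_iff[of X FX TFX iFX]
      free_topological_group_totally_disconnected_iff[of Y FY TFY iFY]
      homeomorphic_map_totally_disconnected_space by blast
next
  assume free: "free_abelian_topological_group X AX TAX iAX \<and>
      free_abelian_topological_group Y AY TAY iAY \<and> top_group_isomorphic AX TAX AY TAY"
  then obtain h where "homeomorphic_map TAX TAY h"
    by (auto simp: top_group_isomorphic_def)
  then show ?thesis
    using free free_abelian_topological_group_totally_disconnected_iff[of X AX TAX iAX]
      free_abelian_topological_group_totally_disconnected_iff[of Y AY TAY iAY]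
      homeomorphic_map_totally_disconnected_space by blast
qed

end
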